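(* Let $v_1,\dots,v_m\in\mathbb{Q}^n$ and $P=P_{v_1,\dots,v_m}$. Let $w\in\sum_{i=1}^m\mathbb{Q}_Pv_i$, and suppose there exist a natural number $k$ none of whose prime factors lies in $P$ and a subset $I\subseteq\{1,\dots,m\}$ such that $kw\in\sum_{i\in I}\mathbb{Q}_Pv_i$. Then $w\in\sum_{i\in I}\mathbb{Q}_Pv_i$.
   Context: An elementary integral relation among $v_1,\dots,v_m$ is a relation $\sum_{i=1}^m a_iv_i=0$ with $a_i\in\mathbb{Z}$ not all zero, whose support $\{i:a_i\neq0\}$ is minimal (inclusion-wise) among supports of nontrivial linear relations, and whose coefficients have greatest common divisor $1$. $P_{v_1,\dots,v_m}$ is the (finite) set of primes $p$ for which there exists an elementary integral relation $\sum a_iv_i=0$ with $p\mid\prod_{a_i\neq0}a_i$. For a set of primes $P$, $\mathbb{Q}_P=\{a/b: a,b\in\mathbb{Z},\ b\neq0,\ \text{all prime factors of } b \text{ lie in } P\}$ (so $\mathbb{Q}_\emptyset=\mathbb{Z}$). *)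

theory Defs
  imports Complex_Main "HOL-Computational_Algebra.Primes"
begin

text \<open>Vectors in Q^n are functions from a finite index type 'n to rat.
  The family v_1,...,v_m is a function v :: nat => 'n => rat, used on {1..m}.\<close>

definition lin_comb :: "(nat \<Rightarrow> 'n \<Rightarrow> rat) \<Rightarrow> (nat \<Rightarrow> rat) \<Rightarrow> nat set \<Rightarrow> 'n \<Rightarrow> rat" where
  "lin_comb v c I = (\<lambda>j. \<Sum>i\<in>I. c i * v i j)"

definition is_relation_support :: "(nat \<Rightarrow> 'n \<Rightarrow> rat) \<Rightarrow> nat \<Rightarrow> nat set \<Rightarrow> bool" where
  "is_relation_support v m S \<longleftrightarrow> S \<subseteq> {1..m} \<and> S \<noteq> {} \<and>
     (\<exists>a::nat \<Rightarrow> rat. (\<forall>i\<in>S. a i \<noteq> 0) \<and> lin_comb v a S = (\<lambda>_. 0))"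

definition int_support :: "nat \<Rightarrow> (nat \<Rightarrow> int) \<Rightarrow> nat set" where
  "int_support m a = {i\<in>{1..m}. a i \<noteq> 0}"

definition elementary_integral_relation :: "(nat \<Rightarrow> 'n \<Rightarrow> rat) \<Rightarrow> nat \<Rightarrow> (nat \<Rightarrow> int) \<Rightarrow> bool" where
  "elementary_integral_relation v m a \<longleftrightarrow>
     int_support m a \<noteq> {} \<and>
     lin_comb v (\<lambda>i. of_int (a i)) {1..m} = (\<lambda>_. 0) \<and>
     (\<forall>T. T \<subset> int_support m a \<longrightarrow> \<not> is_relation_support v m T) \<and>
     Gcd (a ` {1..m}) = 1"

definition P_primes :: "(nat \<Rightarrow> 'n \<Rightarrow> rat) \<Rightarrow> nat \<Rightarrow> nat set" where
  "P_primes v m = {p. prime p \<and> (\<exists>a. elementary_integral_relation v m a \<and>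
       int p dvd (\<Prod>i\<in>int_support m a. a i))}"

definition Q_loc :: "nat set \<Rightarrow> rat set" where
  "Q_loc P = {q. \<exists>a b::int. b \<noteq> 0 \<and> q = of_int a / of_int b \<and>
                  (\<forall>p::nat. prime p \<and> int p dvd b \<longrightarrow> p \<in> P)}"

definition QP_span :: "nat set \<Rightarrow> (nat \<Rightarrow> 'n \<Rightarrow> rat) \<Rightarrow> nat set \<Rightarrow> ('n \<Rightarrow> rat) set" where
  "QP_span P v I = {lin_comb v c I | c. \<forall>i\<in>I. c i \<in> Q_loc P}"

end

theory Submission
  imports Defs
begin

text \<open>Let \<open>s\<close> be a rational relation among the \<open>v\<^sub>i\<close> whose coefficients outside \<open>I\<close> lie
  in \<open>\<rat>\<^sub>P\<close>. Choose an elementary integral relation \<open>a\<close> with support inside that of \<open>s\<close>,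
  and an index \<open>j\<close> of its support, outside \<open>I\<close> if possible. Every prime dividing \<open>a\<^sub>j\<close> lies
  in \<open>P\<close> by the very definition of \<open>P\<close>, so \<open>s\<^sub>j/a\<^sub>j \<in> \<rat>\<^sub>P\<close> when \<open>j \<notin> I\<close>; subtracting
  \<open>(s\<^sub>j/a\<^sub>j) a\<close> shrinks the support, and by induction \<open>s\<close> can be altered on \<open>I\<close> alone into a
  relation with all coefficients in \<open>\<rat>\<^sub>P\<close>. Applied to \<open>c - d/k\<close>, where \<open>w = \<Sum> c\<^sub>i v\<^sub>i\<close>
  and \<open>k w = \<Sum>\<^sub>i\<^sub>\<in>\<^sub>I d\<^sub>i v\<^sub>i\<close>, this expresses \<open>w\<close> over \<open>I\<close> with coefficients in \<open>\<rat>\<^sub>P\<close>.\<close>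

lemma prime_divisors_in_mult:
  fixes b d :: int
  assumes "\<forall>p::nat. prime p \<and> int p dvd b \<longrightarrow> p \<in> P"
    and "\<forall>p::nat. prime p \<and> int p dvd d \<longrightarrow> p \<in> P"
  shows "\<forall>p::nat. prime p \<and> int p dvd b * d \<longrightarrow> p \<in> P"
  using assms prime_dvd_mult_iff[of "int p" b d for p] by auto

lemma Q_loc_of_int [simp]: "of_int z \<in> Q_loc P"
  unfolding Q_loc_def by (intro CollectI exI[of _ z] exI[of _ 1]) auto

lemma Q_loc_inverse_of_int:
  assumes "a \<noteq> 0" "\<forall>p::nat. prime p \<and> int p dvd a \<longrightarrow> p \<in> P"
  shows "inverse (of_int a) \<in> Q_loc P"
  unfolding Q_loc_def using assms by (intro CollectI exI[of _ 1] exI[of _ a]) (auto simp: divide_inverse)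

lemma Q_loc_mult:
  assumes "x \<in> Q_loc P" "y \<in> Q_loc P" shows "x * y \<in> Q_loc P"
proof -
  obtain a b where "b \<noteq> 0" "x = of_int a / of_int b" "\<forall>p::nat. prime p \<and> int p dvd b \<longrightarrow> p \<in> P"
    using assms(1) unfolding Q_loc_def by blast
  moreover obtain c d where "d \<noteq> 0" "y = of_int c / of_int d" "\<forall>p::nat. prime p \<and> int p dvd d \<longrightarrow> p \<in> P"
    using assms(2) unfolding Q_loc_def by blast
  ultimately show ?thesis
    unfolding Q_loc_def using prime_divisors_in_mult[of b P d]
    by (intro CollectI exI[of _ "a * c"] exI[of _ "b * d"]) auto
qed

lemma Q_loc_add:
  assumes "x \<in> Q_loc P" "y \<in> Q_loc P" shows "x + y \<in> Q_loc P"
proof -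
  obtain a b where "b \<noteq> 0" "x = of_int a / of_int b" "\<forall>p::nat. prime p \<and> int p dvd b \<longrightarrow> p \<in> P"
    using assms(1) unfolding Q_loc_def by blast
  moreover obtain c d where "d \<noteq> 0" "y = of_int c / of_int d" "\<forall>p::nat. prime p \<and> int p dvd d \<longrightarrow> p \<in> P"
    using assms(2) unfolding Q_loc_def by blast
  ultimately show ?thesis
    unfolding Q_loc_def using prime_divisors_in_mult[of b P d]
    by (intro CollectI exI[of _ "a * d + c * b"] exI[of _ "b * d"]) (auto simp: field_simps)
qed

lemma Q_loc_diff:
  assumes "x \<in> Q_loc P" "y \<in> Q_loc P" shows "x - y \<in> Q_loc P"
  using Q_loc_add[OF assms(1) Q_loc_mult[OF Q_loc_of_int[of "-1"] assms(2)]] by simp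

lemma ex_common_denominator:
  fixes A :: "rat set"
  assumes "finite A"
  shows "\<exists>D::int. D > 0 \<and> (\<forall>q\<in>A. \<exists>z. q * of_int D = of_int z)"
proof -
  define D where "D = (\<Prod>q\<in>A. snd (quotient_of q))"
  have "q * of_int D = of_int (fst (quotient_of q) * (\<Prod>r\<in>A - {q}. snd (quotient_of r)))"
    if "q \<in> A" for q
  proof -
    have "D = snd (quotient_of q) * (\<Prod>r\<in>A - {q}. snd (quotient_of r))"
      unfolding D_def using assms that by (simp add: prod.remove)
    moreover have "q * of_int (snd (quotient_of q)) = of_int (fst (quotient_of q))"
      using quotient_of_div[of q "fst (quotient_of q)" "snd (quotient_of q)"]
        quotient_of_denom_pos'[of q] by (simp add: field_simps)
    ultimately show ?thesis by (simp add: mult.assoc[symmetric])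
  qed
  moreover have "D > 0" unfolding D_def by (intro prod_pos) (simp add: quotient_of_denom_pos')
  ultimately show ?thesis by blast
qed

lemma ex_primitive_int_multiple:
  fixes b :: "'a \<Rightarrow> rat"
  assumes "finite A" "i0 \<in> A" "b i0 \<noteq> 0"
  shows "\<exists>(a::'a \<Rightarrow> int) r. r \<noteq> 0 \<and> (\<forall>i\<in>A. of_int (a i) = r * b i) \<and> Gcd (a ` A) = 1"
proof -
  obtain D :: int where D: "D > 0" "\<forall>q\<in>b ` A. \<exists>z. q * of_int D = of_int z"
    using ex_common_denominator[of "b ` A"] assms(1) by blast
  then have "\<forall>i\<in>A. \<exists>z. of_int z = b i * of_int D" by (metis image_eqI)
  then obtain f where f: "\<And>i. i \<in> A \<Longrightarrow> of_int (f i) = b i * of_int D"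
    by metis
  define g where "g = Gcd (f ` A)"
  have "f i0 \<noteq> 0" using f[OF assms(2)] assms(3) D(1) by (cases "f i0 = 0") auto
  then have "g \<noteq> 0" unfolding g_def using assms(2) by auto
  then have "g > 0" unfolding g_def using Gcd_int_greater_eq_0[of "f ` A"] by linarith
  define a where "a i = f i div g" for i
  have f_eq: "f i = g * a i" if "i \<in> A" for i
    unfolding a_def g_def using that by (simp add: Gcd_dvd)
  then have "f ` A = (*) g ` (a ` A)" by (simp add: image_image cong: image_cong)
  then have "g = g * Gcd (a ` A)"
    using Gcd_mult[of g "a ` A"] \<open>g > 0\<close> unfolding g_def by (simp add: abs_mult)
  then have "Gcd (a ` A) = 1" using \<open>g > 0\<close> by simp
  moreover have "of_int (a i) = of_int D / of_int g * b i" if "i \<in> A" for i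
    using f[OF that] f_eq[OF that] \<open>g > 0\<close> by (simp add: field_simps)
  moreover have "of_int D / of_int g \<noteq> (0::rat)" using D(1) \<open>g > 0\<close> by simp
  ultimately show ?thesis by blast
qed

lemma lin_comb_mono_neutral:
  assumes "finite A" "I \<subseteq> A" "\<forall>i\<in>A - I. c i = 0"
  shows "lin_comb v c A = lin_comb v c I"
  unfolding lin_comb_def using assms by (intro ext sum.mono_neutral_right) auto

lemma lin_comb_add_scaled:
  "lin_comb v (\<lambda>i. s i + t * r i) A = (\<lambda>j. lin_comb v s A j + t * lin_comb v r A j)"
  unfolding lin_comb_def by (simp add: algebra_simps sum.distrib sum_distrib_left)

lemma relation_support_of_relation:
  assumes "lin_comb v s {1..m} = (\<lambda>_. 0)" "{i\<in>{1..m}. s i \<noteq> 0} \<noteq> {}"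
  shows "is_relation_support v m {i\<in>{1..m}. s i \<noteq> 0}"
proof -
  have "lin_comb v s {i\<in>{1..m}. s i \<noteq> 0} = lin_comb v s {1..m}"
    by (rule lin_comb_mono_neutral[symmetric]) auto
  then show ?thesis
    unfolding is_relation_support_def using assms by (intro conjI exI[of _ s]) auto
qed

lemma ex_minimal_relation_support:
  assumes "is_relation_support v m S"
  shows "\<exists>C\<subseteq>S. is_relation_support v m C \<and> (\<forall>T\<subset>C. \<not> is_relation_support v m T)"
proof -
  obtain C where C: "C \<subseteq> S \<and> is_relation_support v m C"
    and least: "\<And>T. T \<subseteq> S \<and> is_relation_support v m T \<Longrightarrow> card C \<le> card T"
    using ex_has_least_nat[of "\<lambda>T. T \<subseteq> S \<and> is_relation_support v m T" S card] assms by blast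
  have "finite C" using C unfolding is_relation_support_def by (auto intro: finite_subset)
  then have "\<not> is_relation_support v m T" if "T \<subset> C" for T
    using least[of T] psubset_card_mono[OF _ that] that C by fastforce
  then show ?thesis using C by blast
qed

lemma elementary_relation_of_minimal_support:
  assumes "is_relation_support v m C" "\<forall>T\<subset>C. \<not> is_relation_support v m T"
  shows "\<exists>a. elementary_integral_relation v m a \<and> int_support m a = C"
proof -
  obtain b where C: "C \<subseteq> {1..m}" "C \<noteq> {}" and b: "\<forall>i\<in>C. b i \<noteq> 0" "lin_comb v b C = (\<lambda>_. 0)"
    using assms(1) unfolding is_relation_support_def by blast
  define b' where "b' i = (if i \<in> C then b i else 0)" for i
  obtain i0 where "i0 \<in> C" using C(2) by blast
  then have "i0 \<in> {1..m}" "b' i0 \<noteq> 0" using C(1) b(1) unfolding b'_def by auto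
  then obtain a r where r: "r \<noteq> 0" and a: "\<forall>i\<in>{1..m}. of_int (a i) = r * b' i"
    and gcd: "Gcd (a ` {1..m}) = 1"
    using ex_primitive_int_multiple[of "{1..m}" i0 b'] by blast
  have a_nonzero_iff: "a i \<noteq> 0 \<longleftrightarrow> i \<in> C" if "i \<in> {1..m}" for i
    using a[rule_format, OF that] r b(1) unfolding b'_def by (cases "i \<in> C") auto
  then have supp: "int_support m a = C"
    unfolding int_support_def using C(1) by blast
  have "a i = 0" if "i \<in> {1..m} - C" for i
    using a_nonzero_iff[of i] that by simp
  then have "lin_comb v (\<lambda>i. of_int (a i)) {1..m} = lin_comb v (\<lambda>i. of_int (a i)) C"
    using C(1) by (intro lin_comb_mono_neutral) auto
  also have "\<dots> = lin_comb v (\<lambda>i. r * b i) C"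
    unfolding lin_comb_def using a C(1) unfolding b'_def by (intro ext sum.cong) auto
  also have "\<dots> = (\<lambda>_. 0)"
    using b(2) unfolding lin_comb_def by (simp add: sum_distrib_left[symmetric] mult.assoc fun_eq_iff)
  finally have "elementary_integral_relation v m a"
    unfolding elementary_integral_relation_def using supp C(2) assms(2) gcd by auto
  with supp show ?thesis by blast
qed

lemma ex_elementary_relation_within:
  assumes "lin_comb v s {1..m} = (\<lambda>_. 0)" "{i\<in>{1..m}. s i \<noteq> 0} \<noteq> {}"
  shows "\<exists>a. elementary_integral_relation v m a \<and> int_support m a \<subseteq> {i\<in>{1..m}. s i \<noteq> 0}"
proof -
  obtain C where "C \<subseteq> {i\<in>{1..m}. s i \<noteq> 0}" "is_relation_support v m C"
    "\<forall>T\<subset>C. \<not> is_relation_support v m T"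
    using ex_minimal_relation_support[OF relation_support_of_relation[OF assms]] by blast
  with elementary_relation_of_minimal_support[of v m C] show ?thesis by auto
qed

lemma inverse_elementary_coeff_in_Q_loc:
  assumes "elementary_integral_relation v m a" "j \<in> int_support m a"
  shows "inverse (of_int (a j)) \<in> Q_loc (P_primes v m)"
proof (rule Q_loc_inverse_of_int)
  show "a j \<noteq> 0" using assms(2) unfolding int_support_def by simp
  have "a j dvd (\<Prod>i\<in>int_support m a. a i)"
    using assms(2) by (intro dvd_prodI) (simp add: int_support_def)
  then show "\<forall>p::nat. prime p \<and> int p dvd a j \<longrightarrow> p \<in> P_primes v m"
    unfolding P_primes_def using assms(1) by (blast intro: dvd_trans)
qed

lemma ex_Q_loc_relation_eq_outside:
  assumes "lin_comb v s {1..m} = (\<lambda>_. 0)" "\<forall>i\<in>{1..m} - I. s i \<in> Q_loc (P_primes v m)"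
  shows "\<exists>y. lin_comb v y {1..m} = (\<lambda>_. 0) \<and> (\<forall>i\<in>{1..m}. y i \<in> Q_loc (P_primes v m))
           \<and> (\<forall>i\<in>{1..m} - I. y i = s i)"
  using assms
proof (induction "card {i\<in>{1..m}. s i \<noteq> 0}" arbitrary: s rule: less_induct)
  case less
  define P where "P = P_primes v m"
  define S where "S = {i\<in>{1..m}. s i \<noteq> 0}"
  show ?case
  proof (cases "S = {}")
    case True
    then show ?thesis
      unfolding S_def lin_comb_def using Q_loc_of_int[of 0] by (intro exI[of _ "\<lambda>_. 0"]) auto
  next
    case False
    obtain a where a: "elementary_integral_relation v m a" and a_S: "int_support m a \<subseteq> S"
      using ex_elementary_relation_within[OF less.prems(1)] False unfolding S_def by blast
    have a_rel: "lin_comb v (\<lambda>i. of_int (a i)) {1..m} = (\<lambda>_. 0)"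
      using a unfolding elementary_integral_relation_def by blast
    obtain j where j: "j \<in> int_support m a" and j_I: "j \<notin> I \<or> int_support m a \<subseteq> I"
      using a unfolding elementary_integral_relation_def by blast
    have j_m: "j \<in> {1..m}" and a_j: "a j \<noteq> 0" using j unfolding int_support_def by auto
    define t where "t = s j / of_int (a j)"
    \<comment> \<open>If \<open>j \<in> I\<close> then \<open>a\<close> vanishes outside \<open>I\<close>, so \<open>t a\<close> need not be added back.\<close>
    define u where "u = (if j \<in> I then 0 else t)"
    have u_Q_loc: "u \<in> Q_loc P"
    proof (cases "j \<in> I")
      case False
      then have "s j \<in> Q_loc P" using less.prems(2) j_m unfolding P_def by blast
      then show ?thesis
        using False Q_loc_mult inverse_elementary_coeff_in_Q_loc[OF a j]
        unfolding u_def t_def P_def divide_inverse by simp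
    qed (use Q_loc_of_int[of 0] u_def in simp)
    have t_u: "t * of_int (a i) = u * of_int (a i)" if "i \<in> {1..m} - I" for i
      using j_I that unfolding u_def int_support_def by auto
    define s' where "s' i = s i + - t * of_int (a i)" for i
    have s'_rel: "lin_comb v s' {1..m} = (\<lambda>_. 0)"
      unfolding s'_def lin_comb_add_scaled less.prems(1) a_rel by simp
    have s'_outside: "s' i = s i - u * of_int (a i)" if "i \<in> {1..m} - I" for i
      using t_u[OF that] unfolding s'_def by simp
    have "s' j = 0" using a_j unfolding s'_def t_def by simp
    moreover have "a i = 0" if "i \<in> {1..m}" "s i = 0" for i
      using a_S that unfolding S_def int_support_def by blast
    ultimately have "{i\<in>{1..m}. s' i \<noteq> 0} \<subseteq> S - {j}" unfolding S_def s'_def by auto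
    then have "card {i\<in>{1..m}. s' i \<noteq> 0} \<le> card (S - {j})"
      by (intro card_mono) (simp_all add: S_def)
    also have "\<dots> < card S"
      using j a_S by (intro card_Diff1_less) (auto simp: S_def)
    finally have "card {i\<in>{1..m}. s' i \<noteq> 0} < card S" .
    moreover have "\<forall>i\<in>{1..m} - I. s' i \<in> Q_loc P"
      using less.prems(2) u_Q_loc s'_outside unfolding P_def by (auto intro!: Q_loc_diff Q_loc_mult)
    ultimately obtain y where y: "lin_comb v y {1..m} = (\<lambda>_. 0)" "\<forall>i\<in>{1..m}. y i \<in> Q_loc P"
      "\<forall>i\<in>{1..m} - I. y i = s' i"
      using less.hyps[OF _ s'_rel] unfolding S_def P_def by blast
    show ?thesis
    proof (intro exI[of _ "\<lambda>i. y i + u * of_int (a i)"] conjI)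
      show "lin_comb v (\<lambda>i. y i + u * of_int (a i)) {1..m} = (\<lambda>_. 0)"
        unfolding lin_comb_add_scaled y(1) a_rel by simp
      show "\<forall>i\<in>{1..m}. y i + u * of_int (a i) \<in> Q_loc (P_primes v m)"
        using y(2) u_Q_loc unfolding P_def by (auto intro!: Q_loc_add Q_loc_mult)
      show "\<forall>i\<in>{1..m} - I. y i + u * of_int (a i) = s i"
        using y(3) s'_outside by simp
    qed
  qed
qed

lemma rat_comb_in_QP_span:
  assumes "w \<in> QP_span (P_primes v m) v {1..m}" "I \<subseteq> {1..m}" "w = lin_comb v r I"
  shows "w \<in> QP_span (P_primes v m) v I"
proof -
  define P where "P = P_primes v m"
  obtain c where w_c: "w = lin_comb v c {1..m}" and c: "\<forall>i\<in>{1..m}. c i \<in> Q_loc P"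
    using assms(1) unfolding QP_span_def P_def by blast
  define r' where "r' i = (if i \<in> I then r i else 0)" for i
  have "lin_comb v r' {1..m} = lin_comb v r' I"
    using assms(2) unfolding r'_def by (intro lin_comb_mono_neutral) auto
  also have "\<dots> = w" unfolding assms(3) lin_comb_def r'_def by simp
  finally have "lin_comb v (\<lambda>i. c i + - 1 * r' i) {1..m} = (\<lambda>_. 0)"
    unfolding lin_comb_add_scaled w_c by simp
  moreover have "\<forall>i\<in>{1..m} - I. c i + - 1 * r' i \<in> Q_loc P"
    using c unfolding r'_def by simp
  ultimately obtain y where y: "lin_comb v y {1..m} = (\<lambda>_. 0)" "\<forall>i\<in>{1..m}. y i \<in> Q_loc P"
    "\<forall>i\<in>{1..m} - I. y i = c i + - 1 * r' i"
    using ex_Q_loc_relation_eq_outside unfolding P_def by blast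
  have "w = lin_comb v (\<lambda>i. c i + - 1 * y i) {1..m}"
    unfolding lin_comb_add_scaled w_c y(1) by simp
  also have "\<dots> = lin_comb v (\<lambda>i. c i + - 1 * y i) I"
    using assms(2) y(3) unfolding r'_def by (intro lin_comb_mono_neutral) auto
  finally have "w = lin_comb v (\<lambda>i. c i + - 1 * y i) I" .
  moreover have "\<forall>i\<in>I. c i + - 1 * y i \<in> Q_loc P"
    using c y(2) assms(2) by (auto intro!: Q_loc_diff)
  ultimately show ?thesis unfolding QP_span_def P_def by blast
qed

theorem mainTheorem5:
  fixes v :: "nat \<Rightarrow> 'n::finite \<Rightarrow> rat" and m k :: nat
    and w :: "'n \<Rightarrow> rat" and I :: "nat set"
  assumes "w \<in> QP_span (P_primes v m) v {1..m}"
    and "k > 0"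
    and "\<forall>p. prime p \<and> p dvd k \<longrightarrow> p \<notin> P_primes v m"
    and "I \<subseteq> {1..m}"
    and "(\<lambda>j. of_nat k * w j) \<in> QP_span (P_primes v m) v I"
  shows "w \<in> QP_span (P_primes v m) v I"
proof -
  obtain d where "(\<lambda>j. of_nat k * w j) = lin_comb v d I"
    using assms(5) unfolding QP_span_def by blast
  then have "of_nat k * w j = (\<Sum>i\<in>I. d i * v i j)" for j
    unfolding lin_comb_def by (simp add: fun_eq_iff)
  then have "w = lin_comb v (\<lambda>i. d i / of_nat k) I"
    using assms(2) unfolding lin_comb_def
    by (simp add: fun_eq_iff sum_divide_distrib[symmetric] field_simps)
  then show ?thesis using rat_comb_in_QP_span[OF assms(1,4)] by blast
qed

end
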